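(* Let $\mathcal{M}$ be a matroid on $[n]$, let $\gamma$ be a basic $\ell$-cover of $\mathcal{M}$, and let $H$ be an independent set of $\mathcal{M}(\gamma)$ with $H\subseteq\operatorname{supp}\gamma$ and $\gamma(H)=\ell$. Then: (1) $\mathcal{M}(\gamma)/H=\mathcal{M}(\gamma)^0$, i.e. a set $I\subseteq[n]-H$ satisfies $I\cup H\in\mathcal{M}(\gamma)$ if and only if $I$ is independent in $\mathcal{M}(\gamma)|_{[n]-\operatorname{supp}\gamma}$; (2) if moreover $\gamma(i)\le 1$ for all $i\in[n]$, then $\mathcal{M}(\gamma)|_{[n]-\operatorname{supp}\gamma}=\mathcal{M}|_{[n]-\operatorname{supp}\gamma}$.
   Context: Matroids are identified with their independence complexes. For $\gamma:[n]\to\mathbb{N}_0$ and $S\subseteq[n]$, $\gamma(S)=\sum_{i\in S}\gamma(i)$, $\operatorname{supp}\gamma=\{i:\gamma(i)>0\}$. $\gamma$ is an $\ell$-cover of $\mathcal{M}$ if $\gamma(F)\ge\ell$ for every basis $F$, basic if minimal among $\ell$-covers in the pointwise order. $\mathcal{M}(\gamma)$ is the matroid (complex) generated by the bases $F$ of $\mathcal{M}$ with $\gamma(F)=\ell$, and $\mathcal{M}(\gamma)^0:=\mathcal{M}(\gamma)|_{[n]-\operatorname{supp}\gamma}$. $\mathcal{M}|_A$ denotes restriction and $\mathcal{M}/H$ contraction (independent sets $I\subseteq [n]-H$ with $I\cup H$ independent). *)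

theory Defs
  imports Main
begin

definition matroid :: "nat \<Rightarrow> nat set set \<Rightarrow> bool" where
  "matroid n M \<longleftrightarrow>
     (\<forall>I\<in>M. I \<subseteq> {1..n}) \<and> {} \<in> M \<and>
     (\<forall>I J. J \<in> M \<longrightarrow> I \<subseteq> J \<longrightarrow> I \<in> M) \<and>
     (\<forall>I J. I \<in> M \<longrightarrow> J \<in> M \<longrightarrow> card I < card J \<longrightarrow>
        (\<exists>x\<in>J - I. insert x I \<in> M))"

definition basis :: "nat set set \<Rightarrow> nat set \<Rightarrow> bool" where
  "basis M F \<longleftrightarrow> F \<in> M \<and> (\<forall>G\<in>M. F \<subseteq> G \<longrightarrow> G = F)"

definition supp :: "(nat \<Rightarrow> nat) \<Rightarrow> nat set" where
  "supp \<gamma> = {i. \<gamma> i > 0}"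

definition is_cover :: "nat set set \<Rightarrow> nat \<Rightarrow> (nat \<Rightarrow> nat) \<Rightarrow> bool" where
  "is_cover M l \<gamma> \<longleftrightarrow> (\<forall>F. basis M F \<longrightarrow> sum \<gamma> F \<ge> l)"

definition basic_cover :: "nat set set \<Rightarrow> nat \<Rightarrow> (nat \<Rightarrow> nat) \<Rightarrow> bool" where
  "basic_cover M l \<gamma> \<longleftrightarrow> is_cover M l \<gamma> \<and>
     (\<forall>\<delta>. is_cover M l \<delta> \<longrightarrow> (\<forall>i. \<delta> i \<le> \<gamma> i) \<longrightarrow> \<delta> = \<gamma>)"

definition Mgamma :: "nat set set \<Rightarrow> nat \<Rightarrow> (nat \<Rightarrow> nat) \<Rightarrow> nat set set" where
  "Mgamma M l \<gamma> = {I. \<exists>F. basis M F \<and> sum \<gamma> F = l \<and> I \<subseteq> F}"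

definition restrict_cx :: "nat set set \<Rightarrow> nat set \<Rightarrow> nat set set" where
  "restrict_cx M A = {I \<in> M. I \<subseteq> A}"

definition contract_cx :: "nat \<Rightarrow> nat set set \<Rightarrow> nat set \<Rightarrow> nat set set" where
  "contract_cx n M H = {I. I \<subseteq> {1..n} - H \<and> I \<union> H \<in> M}"

end

theory Submission
  imports Defs
begin

text \<open>If F \<supseteq> H is a basis with \<gamma>(F) = l = \<gamma>(H), then \<gamma> vanishes on F - H, so every I disjoint
  from H with I \<union> H \<in> M(\<gamma>) avoids supp \<gamma>. Conversely, let I \<in> M avoid supp \<gamma>, let G \<supseteq> H
  be a basis with \<gamma>(G) = l, and extend I to a basis B \<subseteq> I \<union> G. Then \<gamma> vanishes on B - H, so
  l \<le> \<gamma>(B) = \<gamma>(B \<inter> H) \<le> \<gamma>(H) = l; as H \<subseteq> supp \<gamma>, this forces H \<subseteq> B, and B witnesses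
  I \<union> H \<in> M(\<gamma>).\<close>

lemma matroid_independent_subset_ground: "matroid n M \<Longrightarrow> I \<in> M \<Longrightarrow> I \<subseteq> {1..n}"
  unfolding matroid_def by blast

lemma matroid_independent_finite: "matroid n M \<Longrightarrow> I \<in> M \<Longrightarrow> finite I"
  by (meson matroid_independent_subset_ground finite_atLeastAtMost finite_subset)

lemma matroid_independent_card_le: "matroid n M \<Longrightarrow> I \<in> M \<Longrightarrow> card I \<le> n"
  using card_mono[OF finite_atLeastAtMost matroid_independent_subset_ground] by fastforce

lemma matroid_downward_closed: "matroid n M \<Longrightarrow> J \<in> M \<Longrightarrow> I \<subseteq> J \<Longrightarrow> I \<in> M"
  unfolding matroid_def by blast

lemma matroid_augment:
  "matroid n M \<Longrightarrow> I \<in> M \<Longrightarrow> J \<in> M \<Longrightarrow> card I < card J \<Longrightarrow> \<exists>x\<in>J - I. insert x I \<in> M"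
  unfolding matroid_def by blast

lemma basis_independent: "basis M F \<Longrightarrow> F \<in> M"
  unfolding basis_def by blast

lemma basis_if_card_ge_basis:
  assumes M: "matroid n M" and G: "basis M G" and B: "B \<in> M" and card: "card G \<le> card B"
  shows "basis M B"
  unfolding basis_def
proof (intro conjI B ballI impI)
  fix B' assume B': "B' \<in> M" and "B \<subseteq> B'"
  show "B' = B"
  proof (rule ccontr)
    assume "B' \<noteq> B"
    with \<open>B \<subseteq> B'\<close> have "card B < card B'"
      using matroid_independent_finite[OF M B'] by (simp add: psubset_card_mono)
    with card have "card G < card B'" by simp
    then obtain x where "x \<in> B' - G" "insert x G \<in> M"
      using matroid_augment[OF M basis_independent[OF G] B'] by blast
    with G show False unfolding basis_def by blast
  qed
qed

lemma exists_basis_between: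
  assumes M: "matroid n M" and I: "I \<in> M" and G: "basis M G"
  shows "\<exists>B. basis M B \<and> I \<subseteq> B \<and> B \<subseteq> I \<union> G"
proof -
  define S where "S = {B \<in> M. I \<subseteq> B \<and> B \<subseteq> I \<union> G}"
  have "I \<in> S" using I unfolding S_def by blast
  moreover have "\<forall>B. B \<in> S \<longrightarrow> card B < Suc n"
    unfolding S_def using matroid_independent_card_le[OF M] by (simp add: less_Suc_eq_le)
  ultimately obtain B where "B \<in> S" and B_max: "\<And>B'. B' \<in> S \<Longrightarrow> card B' \<le> card B"
    using Lattices_Big.ex_has_greatest_nat[of "\<lambda>B. B \<in> S" I card "Suc n"] by blast
  then have BM: "B \<in> M" and "I \<subseteq> B" and "B \<subseteq> I \<union> G" unfolding S_def by auto
  have "card G \<le> card B"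
  proof (rule ccontr)
    assume "\<not> card G \<le> card B"
    then obtain x where x: "x \<in> G - B" "insert x B \<in> M"
      using matroid_augment[OF M BM basis_independent[OF G]] by auto
    with \<open>I \<subseteq> B\<close> \<open>B \<subseteq> I \<union> G\<close> have "insert x B \<in> S" unfolding S_def by auto
    then have "card (insert x B) \<le> card B" by (rule B_max)
    with x matroid_independent_finite[OF M BM] show False by simp
  qed
  with basis_if_card_ge_basis[OF M G BM] \<open>I \<subseteq> B\<close> \<open>B \<subseteq> I \<union> G\<close> show ?thesis by blast
qed

lemma sum_nat_zero_outside_if_le:
  fixes f :: "'a \<Rightarrow> nat"
  assumes "finite A" and "B \<subseteq> A" and "sum f A \<le> sum f B" and "x \<in> A - B"
  shows "f x = 0"
proof -
  have "sum f A = sum f B + sum f (A - B)"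
    using assms(1,2) by (metis add.commute sum.subset_diff)
  with assms(3) have "sum f (A - B) = 0" by simp
  with assms(1,4) show ?thesis by simp
qed

lemma Mgamma_downward_closed: "J \<in> Mgamma M l \<gamma> \<Longrightarrow> I \<subseteq> J \<Longrightarrow> I \<in> Mgamma M l \<gamma>"
  unfolding Mgamma_def by blast

lemma Mgamma_subset: "matroid n M \<Longrightarrow> Mgamma M l \<gamma> \<subseteq> M"
  unfolding Mgamma_def using matroid_downward_closed basis_independent by blast

lemma disjoint_supp_if_union_in_Mgamma:
  assumes M: "matroid n M" and H: "sum \<gamma> H = l"
    and IH: "I \<union> H \<in> Mgamma M l \<gamma>" and disj: "I \<inter> H = {}"
  shows "I \<inter> supp \<gamma> = {}"
proof -
  obtain F where F: "basis M F" "sum \<gamma> F = l" "I \<union> H \<subseteq> F"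
    using IH unfolding Mgamma_def by blast
  have "finite F" using matroid_independent_finite[OF M basis_independent[OF F(1)]] .
  have "\<gamma> x = 0" if "x \<in> I" for x
  proof (rule sum_nat_zero_outside_if_le[of F H \<gamma> x])
    show "finite F" by fact
    show "H \<subseteq> F" "sum \<gamma> F \<le> sum \<gamma> H" using F H by auto
    show "x \<in> F - H" using F(3) disj that by blast
  qed
  then show ?thesis unfolding supp_def by auto
qed

lemma union_in_Mgamma_if_disjoint_supp:
  assumes M: "matroid n M" and cover: "is_cover M l \<gamma>"
    and H: "H \<in> Mgamma M l \<gamma>" "H \<subseteq> supp \<gamma>" "sum \<gamma> H = l"
    and I: "I \<in> M" "I \<inter> supp \<gamma> = {}"
  shows "I \<union> H \<in> Mgamma M l \<gamma>"
proof -
  obtain G where G: "basis M G" "sum \<gamma> G = l" "H \<subseteq> G"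
    using H(1) unfolding Mgamma_def by blast
  obtain B where B: "basis M B" "I \<subseteq> B" "B \<subseteq> I \<union> G"
    using exists_basis_between[OF M I(1) G(1)] by blast
  have fin_G: "finite G" and fin_B: "finite B"
    using matroid_independent_finite[OF M] basis_independent G(1) B(1) by blast+
  have "\<gamma> x = 0" if "x \<in> B - H" for x
  proof (cases "x \<in> I")
    case True
    with I(2) show ?thesis unfolding supp_def by auto
  next
    case False
    with that B(3) have "x \<in> G - H" by blast
    with G H(3) fin_G show ?thesis by (intro sum_nat_zero_outside_if_le[of G H]) auto
  qed
  then have "sum \<gamma> B = sum \<gamma> (B \<inter> H)"
    using fin_B by (intro sum.mono_neutral_right) auto
  moreover have "l \<le> sum \<gamma> B" using cover B(1) unfolding is_cover_def by blast
  ultimately have "sum \<gamma> H \<le> sum \<gamma> (B \<inter> H)" using H(3) by simp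
  moreover have "finite H" using fin_G G(3) finite_subset by blast
  ultimately have "\<gamma> x = 0" if "x \<in> H - B" for x
    using that by (intro sum_nat_zero_outside_if_le[of H "B \<inter> H"]) auto
  with H(2) have "H \<subseteq> B" unfolding supp_def by fastforce
  with \<open>sum \<gamma> B = sum \<gamma> (B \<inter> H)\<close> H(3) have "sum \<gamma> B = l" by (simp add: Int_absorb1)
  with B(1,2) \<open>H \<subseteq> B\<close> show ?thesis unfolding Mgamma_def by blast
qed

lemma contract_Mgamma_eq_restrict:
  assumes M: "matroid n M" and cover: "is_cover M l \<gamma>"
    and H: "H \<in> Mgamma M l \<gamma>" "H \<subseteq> supp \<gamma>" "sum \<gamma> H = l"
  shows "contract_cx n (Mgamma M l \<gamma>) H = restrict_cx (Mgamma M l \<gamma>) ({1..n} - supp \<gamma>)"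
proof (intro set_eqI iffI)
  fix I assume "I \<in> contract_cx n (Mgamma M l \<gamma>) H"
  then have "I \<subseteq> {1..n} - H" "I \<union> H \<in> Mgamma M l \<gamma>" unfolding contract_cx_def by auto
  moreover from this have "I \<inter> supp \<gamma> = {}"
    using disjoint_supp_if_union_in_Mgamma[OF M H(3)] by blast
  ultimately show "I \<in> restrict_cx (Mgamma M l \<gamma>) ({1..n} - supp \<gamma>)"
    unfolding restrict_cx_def using Mgamma_downward_closed by blast
next
  fix I assume "I \<in> restrict_cx (Mgamma M l \<gamma>) ({1..n} - supp \<gamma>)"
  then have "I \<in> M" "I \<subseteq> {1..n} - supp \<gamma>"
    unfolding restrict_cx_def using Mgamma_subset[OF M] by auto
  with union_in_Mgamma_if_disjoint_supp[OF M cover H] H(2)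
  show "I \<in> contract_cx n (Mgamma M l \<gamma>) H" unfolding contract_cx_def by blast
qed

lemma restrict_Mgamma_eq_restrict:
  assumes M: "matroid n M" and cover: "is_cover M l \<gamma>"
    and H: "H \<in> Mgamma M l \<gamma>" "H \<subseteq> supp \<gamma>" "sum \<gamma> H = l"
  shows "restrict_cx (Mgamma M l \<gamma>) ({1..n} - supp \<gamma>) = restrict_cx M ({1..n} - supp \<gamma>)"
proof (intro set_eqI iffI)
  fix I assume "I \<in> restrict_cx M ({1..n} - supp \<gamma>)"
  then have "I \<in> M" "I \<subseteq> {1..n} - supp \<gamma>" unfolding restrict_cx_def by auto
  with union_in_Mgamma_if_disjoint_supp[OF M cover H]
  show "I \<in> restrict_cx (Mgamma M l \<gamma>) ({1..n} - supp \<gamma>)"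
    unfolding restrict_cx_def using Mgamma_downward_closed by blast
qed (use Mgamma_subset[OF M] in \<open>auto simp: restrict_cx_def\<close>)

theorem proposition3p9:
  fixes n l :: nat and M :: "nat set set" and \<gamma> :: "nat \<Rightarrow> nat" and H :: "nat set"
  assumes "matroid n M"
    and "\<forall>i. i \<notin> {1..n} \<longrightarrow> \<gamma> i = 0"
    and "basic_cover M l \<gamma>"
    and "H \<in> Mgamma M l \<gamma>"
    and "H \<subseteq> supp \<gamma>"
    and "sum \<gamma> H = l"
  shows "contract_cx n (Mgamma M l \<gamma>) H
           = restrict_cx (Mgamma M l \<gamma>) ({1..n} - supp \<gamma>) \<and>
         ((\<forall>i\<in>{1..n}. \<gamma> i \<le> 1) \<longrightarrow>
           restrict_cx (Mgamma M l \<gamma>) ({1..n} - supp \<gamma>)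
           = restrict_cx M ({1..n} - supp \<gamma>))"
proof -
  have cover: "is_cover M l \<gamma>" using assms(3) unfolding basic_cover_def by blast
  show ?thesis
    using contract_Mgamma_eq_restrict[OF assms(1) cover assms(4-6)]
      restrict_Mgamma_eq_restrict[OF assms(1) cover assms(4-6)] by blast
qed

end
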